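(* Let $d_h,d_b\ge1$, $d=2d_h+d_b+2$, $n\ge1$, and $s_1,\dots,s_n\in\mathbb{Q}^{d_b}$. Let $K^e=(k_1,\dots,k_n)$ and $V^e=(v_1,\dots,v_n)$ with $k_i=[0_{d_h},0_{d_b},0_{d_h},-1,i]$ and $v_i=[0_{d_h},s_i,0_{d_h},0,0]$. Let $t\in\mathbb{N}$ and let $q_t\in\mathbb{Q}^d$ be any vector whose last two coordinates are $t+1$ and $1$. Then $$\mathrm{Att}(q_t,K^e,V^e)=[0_{d_h},s_{\min\{t+1,n\}},0_{d_h},0,0].$$
   Context: Vectors are written as concatenations of blocks $[\cdot,\dots]$; $0_k$ is the zero vector of length $k$. $\mathrm{Att}(q,K,V)=\sum_{i=1}^n\alpha_iv_i$ where $(\alpha_1,\dots,\alpha_n)=\mathrm{hardmax}(f^{att}(q,k_1),\dots,f^{att}(q,k_n))$, with $\mathrm{hardmax}(x)_i=1/r$ if $x_i$ is one of the $r$ coordinates attaining the maximum and $0$ otherwise, and scoring function $f^{att}(q,k)=-|\langle q,k\rangle|$. *)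

theory Defs
  imports Main "HOL.Rat"
begin

text \<open>Vectors in Q^k are rational lists of length k; block concatenation is list append.\<close>

definition inner_list :: "rat list \<Rightarrow> rat list \<Rightarrow> rat" where
  "inner_list q k = sum_list (map2 (*) q k)"

definition f_att :: "rat list \<Rightarrow> rat list \<Rightarrow> rat" where
  "f_att q k = - \<bar>inner_list q k\<bar>"

definition hardmax :: "rat list \<Rightarrow> rat list" where
  "hardmax xs = (let m = Max (set xs); r = length (filter (\<lambda>x. x = m) xs)
                 in map (\<lambda>x. if x = m then 1 / of_nat r else 0) xs)"

text \<open>Att(q,K,V) = sum_i alpha_i v_i; coordinates are taken up to the common length of the values.\<close>
definition Att :: "rat list \<Rightarrow> rat list list \<Rightarrow> rat list list \<Rightarrow> rat list" where
  "Att q K V = (let \<alpha> = hardmax (map (f_att q) K)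
                in map (\<lambda>j. \<Sum>i<length K. (\<alpha> ! i) * ((V ! i) ! j)) [0..<length (hd V)])"

end

theory Submission
  imports Defs
begin

text \<open>The key of position i scores -|i - (t+1)| against q, so among positions 1..n the
  single closest one, min(t+1, n), is the unique maximiser; hardmax then puts weight 1 on it
  and the attention returns its value.\<close>

lemma inner_list_replicate_zero_append:
  "inner_list q (replicate m 0 @ k) = inner_list (drop m q) k"
proof (induction m arbitrary: q)
  case (Suc m)
  then show ?case by (cases q) (simp_all add: inner_list_def)
qed simp

lemma hardmax_nth_unique_max:
  assumes "i < length xs" and "\<And>j. j < length xs \<Longrightarrow> j \<noteq> i \<Longrightarrow> xs ! j < xs ! i"
    and "j < length xs"
  shows "hardmax xs ! j = (if j = i then 1 else 0)"
proof -
  have eq_max_iff: "xs ! k = xs ! i \<longleftrightarrow> k = i" if "k < length xs" for k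
    using assms(2)[OF that] by (cases "k = i") auto
  have "Max (set xs) = xs ! i"
    using assms(1,2) by (intro Max_eqI) (auto simp: in_set_conv_nth intro: order.strict_implies_order)
  moreover have "length (filter (\<lambda>x. x = xs ! i) xs) = 1"
  proof -
    have "{j. j < length xs \<and> xs ! j = xs ! i} = {i}"
      using assms(1) eq_max_iff by auto
    then show ?thesis by (simp add: length_filter_conv_card)
  qed
  ultimately show ?thesis
    using assms(1,3) eq_max_iff by (simp add: hardmax_def Let_def)
qed

lemma Att_unique_max:
  assumes "i < length K" and "length (hd V) = length (V ! i)"
    and "\<And>j. j < length K \<Longrightarrow> j \<noteq> i \<Longrightarrow> f_att q (K ! j) < f_att q (K ! i)"
  shows "Att q K V = V ! i"
proof -
  have weight: "hardmax (map (f_att q) K) ! j = (if j = i then 1 else 0)" if "j < length K" for j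
    using assms(1,3) that by (intro hardmax_nth_unique_max) simp_all
  have "(\<Sum>j<length K. hardmax (map (f_att q) K) ! j * (V ! j ! c))
      = (\<Sum>j<length K. if j = i then V ! i ! c else 0)" for c
    by (rule sum.cong) (simp_all add: weight)
  then have "(\<Sum>j<length K. hardmax (map (f_att q) K) ! j * (V ! j ! c)) = V ! i ! c" for c
    using assms(1) by simp
  then have "Att q K V = map (\<lambda>c. V ! i ! c) [0..<length (V ! i)]"
    by (simp add: Att_def assms(2))
  also have "\<dots> = V ! i" by (rule map_nth)
  finally show ?thesis .
qed

lemma abs_diff_min_less:
  fixes c i n :: nat
  assumes "i \<le> n" and "i \<noteq> min c n"
  shows "\<bar>of_nat (min c n) - of_nat c :: 'a :: linordered_idom\<bar> < \<bar>of_nat i - of_nat c\<bar>"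
  using assms by (cases "c \<le> n") (auto simp: abs_if min_def)

lemma f_att_position_key:
  assumes "length q = M + 2" and "q ! M = of_nat c" and "q ! (M + 1) = 1"
  shows "f_att q (replicate M 0 @ [-1, of_nat i]) = - \<bar>of_nat i - of_nat c\<bar>"
proof -
  have "drop M q = [of_nat c, 1]"
    using assms by (simp add: Cons_nth_drop_Suc[symmetric])
  then show ?thesis
    unfolding f_att_def inner_list_replicate_zero_append by (simp add: inner_list_def abs_minus_commute)
qed

theorem lemma3:
  fixes dh db d n t :: nat and s :: "nat \<Rightarrow> rat list" and q :: "rat list"
  assumes "dh \<ge> 1" and "db \<ge> 1" and "d = 2 * dh + db + 2" and "n \<ge> 1"
    and "\<forall>i\<in>{1..n}. length (s i) = db"
    and "length q = d" and "q ! (d - 2) = of_nat (t + 1)" and "q ! (d - 1) = 1"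
  shows "Att q
           (map (\<lambda>i. replicate dh 0 @ replicate db 0 @ replicate dh 0 @ [-1, of_nat i]) [1..<n+1])
           (map (\<lambda>i. replicate dh 0 @ s i @ replicate dh 0 @ [0, 0]) [1..<n+1])
         = replicate dh 0 @ s (min (t + 1) n) @ replicate dh 0 @ [0, 0]"
    (is "Att q ?K ?V = _")
proof -
  define m where "m = min (t + 1) n"
  have m: "1 \<le> m" "m \<le> n" using assms(4) by (auto simp: m_def)
  have K_nth: "?K ! j = replicate (2 * dh + db) 0 @ [-1, of_nat (j + 1)]" if "j < n" for j
    using that by (simp add: replicate_add[symmetric] del: upt_Suc)
  have score: "f_att q (?K ! j) = - \<bar>of_nat (j + 1) - of_nat (t + 1)\<bar>" if "j < n" for j
    unfolding K_nth[OF that] using assms(3,6-8) by (intro f_att_position_key) simp_all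
  have V_nth: "?V ! j = replicate dh 0 @ s (j + 1) @ replicate dh 0 @ [0, 0]" if "j < n" for j
    using that by (simp del: upt_Suc)
  have "Att q ?K ?V = ?V ! (m - 1)"
  proof (rule Att_unique_max)
    show "length (hd ?V) = length (?V ! (m - 1))"
      using assms(4,5) m by (simp add: hd_conv_nth V_nth del: upt_Suc)
    show "f_att q (?K ! j) < f_att q (?K ! (m - 1))" if "j < length ?K" "j \<noteq> m - 1" for j
    proof -
      have "j < n" "m - 1 < n" using that m by simp_all
      then show ?thesis
        unfolding score[OF \<open>j < n\<close>] score[OF \<open>m - 1 < n\<close>]
        using that m abs_diff_min_less[of "j + 1" n "t + 1"] by (simp add: m_def)
    qed
  qed (use m in simp)
  also have "\<dots> = replicate dh 0 @ s m @ replicate dh 0 @ [0, 0]"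
    using m V_nth[of "m - 1"] by simp
  finally show ?thesis unfolding m_def .
qed

end
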